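(* Assume (A1)–(A5). Then for all $(t,x,y)\in(0,+\infty)\times\mathbb{R}^2$, $\underline{u}(t,x+y)-\underline{u}(t,x)\le|y|$.
   Context: Let $R,p,G:\mathbb{R}\to\mathbb{R}$; for each integer $K\ge1$ let $\delta_K>0$ with $\delta_K\to0$ and $h_K:=\delta_K\log K\to0$. (A1) $R,p$ Lipschitz with $\underline{R}\le R\le\overline{R}$, $0<\underline{p}\le p\le\overline{p}$. (A2) $G$ positive continuous, $\int G=1$, $G(x)=f(x)e^{-|x|}$ with $0<\min f\le f\le\sup f<\infty$. (A3) $u^{K,0}(i\delta_K)\le-A|i\delta_K|+B_1$ for all $i,K$, constants $A,B_1>0$. (A4) There is $L\in(0,1)$ with $|u^{K,0}((i+1)\delta_K)-u^{K,0}(i\delta_K)|\le L\delta_K$. (A5) The linear interpolation of $u^{K,0}$ converges locally uniformly to a continuous $u^0$. Let $u^K$ solve $\frac{d}{dt}u^{K}_i=R(i\delta_K)+\sum_{l}p((l+i)\delta_K)h_KG(lh_K)e^{\log K(u^{K}_{l+i}-u^{K}_i)}$, $u^K_i(0)=u^{K,0}(i\delta_K)$, and $\widetilde u^K(t,x)=u^K_i(t)(1-\frac{x}{\delta_K}+i)+u^K_{i+1}(t)(\frac{x}{\delta_K}-i)$ for $x\in[i\delta_K,(i+1)\delta_K)$. Define $\underline{u}(t,x)=\liminf_{K\to\infty,(s,y)\to(t,x)}\widetilde u^K(s,y)$. *)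

theory Defs
  imports "HOL-Analysis.Analysis"
begin

definition interp :: "real \<Rightarrow> (int \<Rightarrow> real) \<Rightarrow> real \<Rightarrow> real" where
  "interp d v x = (let i = \<lfloor>x / d\<rfloor> in
     v i * (1 - x / d + of_int i) + v (i + 1) * (x / d - of_int i))"

definition lower_relaxed :: "(nat \<Rightarrow> real \<Rightarrow> real \<Rightarrow> real) \<Rightarrow> real \<Rightarrow> real \<Rightarrow> ereal" where
  "lower_relaxed w t x =
     Liminf (sequentially \<times>\<^sub>F nhds (t, x)) (\<lambda>(K, (s, y)). ereal (w K s y))"

end

theory Submission
  imports Defs
begin

text \<open>If the inequality failed, there would be reals b + |y| < a such that, for K large, the
  interpolant exceeds a near (t, x + y) but falls below b at points (s, z) arbitrarily close to
  (t, x), hence some grid value satisfies u_j(s) < b. As the rate of u_j is bounded below by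
  inf R, u_j stays below b + O(\<sigma>) on [s - \<sigma>, s], while the roughly \<sigma>/\<delta>_K neighbours
  j + l with l \<delta>_K \<in> [y - \<sigma>, y] lie above it by more than |l \<delta>_K|. Each of them contributes at
  least (inf p) (inf G e^|x|) h_K to the jump sum, so on [s - \<sigma>, s] the rate of u_j is of
  order ln K, and u_j(s) \<ge> u_j(0) - O(1) + C \<sigma>^2 ln K > b for K large, because by (A5) the
  initial data are bounded below near x. Only the lower bounds on R, p and G from (A1) and (A2)
  and the local uniform convergence (A5) enter the argument.\<close>

lemma Liminf_le_Liminf_add:
  fixes f :: "'a \<Rightarrow> real"
  assumes "\<And>a b. b + c < a \<Longrightarrow> \<forall>\<^sub>F q in F. a < f q \<Longrightarrow> \<forall>\<^sub>F q in G. b \<le> f q"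
  shows "Liminf F (\<lambda>q. ereal (f q)) \<le> Liminf G (\<lambda>q. ereal (f q)) + ereal c"
proof (rule ccontr)
  define LF where "LF = Liminf F (\<lambda>q. ereal (f q))"
  define LG where "LG = Liminf G (\<lambda>q. ereal (f q))"
  assume "\<not> ?thesis"
  then have "LG + ereal c < LF" unfolding LF_def LG_def by simp
  then obtain a where a: "LG + ereal c < ereal a" "ereal a < LF"
    using ereal_dense2 by blast
  then have "LG < ereal (a - c)"
    by (cases LG) auto
  then obtain b where b: "LG < ereal b" "ereal b < ereal (a - c)"
    using ereal_dense2 by blast
  have "\<forall>\<^sub>F q in F. a < f q"
    using less_LiminfD[OF a(2)[unfolded LF_def]] by simp
  with b(2) have "\<forall>\<^sub>F q in G. ereal b \<le> ereal (f q)"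
    using assms[of b a] by simp
  then have "ereal b \<le> LG"
    unfolding LG_def by (rule Liminf_bounded)
  with b(1) show False by simp
qed

lemma uniform_limit_eventually_bounded:
  fixes f :: "'i \<Rightarrow> 'a::topological_space \<Rightarrow> 'b::real_normed_vector"
  assumes "uniform_limit S f g F" "continuous_on S g" "compact S"
  shows "\<exists>B. \<forall>\<^sub>F n in F. \<forall>z\<in>S. norm (f n z) \<le> B"
proof -
  obtain B where B: "\<And>z. z \<in> S \<Longrightarrow> norm (g z) \<le> B"
    using compact_imp_bounded[OF compact_continuous_image[OF assms(2,3)]]
    unfolding bounded_iff by auto
  have "\<forall>\<^sub>F n in F. \<forall>z\<in>S. dist (f n z) (g z) < 1"
    using uniform_limitD[OF assms(1)] by simp
  then have "\<forall>\<^sub>F n in F. \<forall>z\<in>S. norm (f n z) \<le> B + 1"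
  proof eventually_elim
    case (elim n)
    show ?case
    proof
      fix z assume "z \<in> S"
      have "norm (f n z) \<le> norm (g z) + norm (f n z - g z)"
        by (rule norm_triangle_sub)
      with B[OF \<open>z \<in> S\<close>] elim \<open>z \<in> S\<close> show "norm (f n z) \<le> B + 1"
        by (auto simp: dist_norm)
    qed
  qed
  then show ?thesis ..
qed

lemma increment_ge_if_DERIV_within_ge:
  fixes f :: "real \<Rightarrow> real"
  assumes "a \<le> b" "{a..b} \<subseteq> S"
    and D: "\<And>s. a \<le> s \<Longrightarrow> s \<le> b \<Longrightarrow> \<exists>D. (f has_real_derivative D) (at s within S) \<and> c \<le> D"
  shows "c * (b - a) \<le> f b - f a"
proof -
  have "continuous_on {a..b} f"
  proof (rule continuous_on_eq_continuous_within[THEN iffD2], rule ballI)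
    fix s assume "s \<in> {a..b}"
    then obtain D where "(f has_real_derivative D) (at s within S)"
      using D by auto
    then show "continuous (at s within {a..b}) f"
      using DERIV_continuous continuous_within_subset assms(2) by blast
  qed
  then have "f a - c * a \<le> f b - c * b"
  proof (intro DERIV_nonneg_imp_increasing_open[OF \<open>a \<le> b\<close>] continuous_intros)
    fix s assume s: "a < s" "s < b"
    then obtain D where fD: "(f has_real_derivative D) (at s within S)" and "c \<le> D"
      using D[of s] by auto
    have "{a<..<b} \<subseteq> interior S"
      using assms(2) by (intro interior_maximal) auto
    with s fD have "(f has_real_derivative D) (at s)"
      using at_within_interior by fastforce
    then have "((\<lambda>s. f s - c * s) has_real_derivative D - c) (at s)"
      by (auto intro!: derivative_eq_intros)
    with \<open>c \<le> D\<close> show "\<exists>y. ((\<lambda>s. f s - c * s) has_real_derivative y) (at s) \<and> 0 \<le> y"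
      by auto
  qed
  then show ?thesis by (simp add: algebra_simps)
qed

lemma grid_points_in_interval:
  assumes "0 < d" "2 * d \<le> \<eta>"
  obtains \<Lambda> :: "int set"
  where "finite \<Lambda>" "\<And>l. l \<in> \<Lambda> \<Longrightarrow> y - \<eta> \<le> of_int l * d \<and> of_int l * d \<le> y"
    "\<eta> \<le> 2 * d * real (card \<Lambda>)"
proof
  define \<Lambda> where "\<Lambda> = {\<lceil>(y - \<eta>) / d\<rceil>..\<lfloor>y / d\<rfloor>}"
  show "finite \<Lambda>" unfolding \<Lambda>_def by simp
  show "y - \<eta> \<le> of_int l * d \<and> of_int l * d \<le> y" if "l \<in> \<Lambda>" for l
  proof -
    have "(y - \<eta>) / d \<le> of_int l" "of_int l \<le> y / d"
      using that unfolding \<Lambda>_def by (simp_all add: ceiling_le_iff le_floor_iff)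
    with \<open>0 < d\<close> show ?thesis by (simp add: field_simps)
  qed
  have "y / d - 1 - (y - \<eta>) / d - 1 + 1 \<le> real (card \<Lambda>)"
    unfolding \<Lambda>_def by simp linarith
  then have "\<eta> / d - 1 \<le> real (card \<Lambda>)" by (simp add: diff_divide_distrib)
  with assms show "\<eta> \<le> 2 * d * real (card \<Lambda>)"
    by (simp add: field_simps)
qed

lemma interp_grid_point:
  assumes "d \<noteq> 0"
  shows "interp d v (of_int j * d) = v j"
  using assms by (simp add: interp_def)

lemma interp_ge_if_nodes_ge:
  assumes "d > 0" and nodes: "\<And>j. \<bar>of_int j * d - z\<bar> \<le> d \<Longrightarrow> b \<le> v j"
  shows "b \<le> interp d v z"
proof -
  define i where "i = \<lfloor>z / d\<rfloor>"
  define \<theta> where "\<theta> = z / d - of_int i"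
  have \<theta>: "0 \<le> \<theta>" "\<theta> \<le> 1" unfolding \<theta>_def i_def by linarith+
  have "of_int i \<le> z / d" "z / d < of_int i + 1" unfolding i_def by linarith+
  with \<open>d > 0\<close> have "of_int i * d \<le> z" "z < (of_int i + 1) * d"
    by (simp_all add: field_simps)
  then have "b \<le> v i" "b \<le> v (i + 1)"
    using nodes[of i] nodes[of "i + 1"] by (simp_all add: algebra_simps)
  then have "b * (1 - \<theta>) + b * \<theta> \<le> v i * (1 - \<theta>) + v (i + 1) * \<theta>"
    using \<theta> by (intro add_mono mult_right_mono) auto
  also have "\<dots> = interp d v z"
    unfolding interp_def i_def \<theta>_def Let_def by (simp add: algebra_simps)
  finally show ?thesis by (simp add: algebra_simps)
qed

lemma eventually_grid_values_ge:
  assumes "\<And>K. K \<ge> 1 \<Longrightarrow> \<delta> K > 0"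
    and "uniform_limit {x - 1..x + 1} (\<lambda>K. interp (\<delta> K) (v K)) g sequentially"
    and "continuous_on {x - 1..x + 1} g"
  shows "\<exists>B. \<forall>\<^sub>F K in sequentially. \<forall>j. \<bar>of_int j * \<delta> K - x\<bar> \<le> 1 \<longrightarrow> - B \<le> v K j"
proof -
  obtain B where "\<forall>\<^sub>F K in sequentially. \<forall>z\<in>{x - 1..x + 1}. norm (interp (\<delta> K) (v K) z) \<le> B"
    using uniform_limit_eventually_bounded[OF assms(2,3) compact_Icc] by blast
  then have "\<forall>\<^sub>F K in sequentially. \<forall>j. \<bar>of_int j * \<delta> K - x\<bar> \<le> 1 \<longrightarrow> - B \<le> v K j"
    using eventually_ge_at_top[of 1]
  proof eventually_elim
    case (elim K)
    show ?case
    proof (intro allI impI)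
      fix j assume "\<bar>of_int j * \<delta> K - x\<bar> \<le> 1"
      then have "of_int j * \<delta> K \<in> {x - 1..x + 1}"
        by (auto simp: abs_le_iff)
      with elim have "\<bar>interp (\<delta> K) (v K) (of_int j * \<delta> K)\<bar> \<le> B"
        by auto
      moreover have "interp (\<delta> K) (v K) (of_int j * \<delta> K) = v K j"
        using assms(1)[of K] elim by (intro interp_grid_point) simp
      ultimately show "- B \<le> v K j"
        by simp
    qed
  qed
  then show ?thesis ..
qed

locale lattice_system =
  fixes R p G :: "real \<Rightarrow> real"
    and \<delta> :: "nat \<Rightarrow> real"
    and u :: "nat \<Rightarrow> int \<Rightarrow> real \<Rightarrow> real"
    and R0 p0 c :: real
  assumes delta_pos: "\<And>K. K \<ge> 1 \<Longrightarrow> \<delta> K > 0"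
    and R_ge: "\<And>x. R0 \<le> R x"
    and p0_pos: "0 < p0" and p_ge: "\<And>x. p0 \<le> p x"
    and G_pos: "\<And>x. 0 < G x"
    and c_pos: "0 < c" and G_exp_ge: "\<And>x. c \<le> G x * exp \<bar>x\<bar>"
    and u_ode: "\<And>K i t. K \<ge> 1 \<Longrightarrow> t \<ge> 0 \<Longrightarrow>
       \<exists>S. ((\<lambda>l::int. p ((of_int l + of_int i) * \<delta> K) * (\<delta> K * ln (real K))
                 * G (of_int l * (\<delta> K * ln (real K)))
                 * exp (ln (real K) * (u K (l + i) t - u K i t))) has_sum S) UNIV
           \<and> ((\<lambda>s. u K i s) has_real_derivative (R (of_int i * \<delta> K) + S)) (at t within {0..})"
begin

definition jump_rate :: "nat \<Rightarrow> int \<Rightarrow> real \<Rightarrow> int \<Rightarrow> real" where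
  "jump_rate K i t l = p ((of_int l + of_int i) * \<delta> K) * (\<delta> K * ln (real K))
     * G (of_int l * (\<delta> K * ln (real K))) * exp (ln (real K) * (u K (l + i) t - u K i t))"

lemma p_nonneg: "0 \<le> p x"
  using p_ge[of x] p0_pos by linarith

lemma jump_rate_nonneg:
  assumes "K \<ge> 1"
  shows "0 \<le> jump_rate K i t l"
proof -
  have "0 \<le> \<delta> K * ln (real K)"
    using delta_pos[OF assms] assms by simp
  moreover have "0 \<le> G (of_int l * (\<delta> K * ln (real K)))"
    using G_pos less_imp_le by blast
  ultimately show ?thesis
    unfolding jump_rate_def using p_nonneg by simp
qed

lemma increment_ge:
  assumes "K \<ge> 1" "0 \<le> s1" "s1 \<le> s2" "finite \<Lambda>"
    and M: "\<And>t. s1 \<le> t \<Longrightarrow> t \<le> s2 \<Longrightarrow> M \<le> sum (jump_rate K j t) \<Lambda>"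
  shows "(R0 + M) * (s2 - s1) \<le> u K j s2 - u K j s1"
proof (rule increment_ge_if_DERIV_within_ge[OF \<open>s1 \<le> s2\<close>])
  show "{s1..s2} \<subseteq> {0..}" using \<open>0 \<le> s1\<close> by auto
  fix t assume t: "s1 \<le> t" "t \<le> s2"
  obtain S where S: "(jump_rate K j t has_sum S) UNIV"
    and D: "(u K j has_real_derivative R (of_int j * \<delta> K) + S) (at t within {0..})"
    using u_ode[OF \<open>K \<ge> 1\<close>, of t j] t assms(2) unfolding jump_rate_def by auto
  have "sum (jump_rate K j t) \<Lambda> \<le> S"
    using has_sum_mono_neutral[OF has_sum_finite[OF \<open>finite \<Lambda>\<close>] S] jump_rate_nonneg[OF \<open>K \<ge> 1\<close>]
    by auto
  with M[OF t] R_ge have "R0 + M \<le> R (of_int j * \<delta> K) + S"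
    by (meson add_mono order.trans)
  with D show "\<exists>D. (u K j has_real_derivative D) (at t within {0..}) \<and> R0 + M \<le> D"
    by blast
qed

corollary increment_ge_R0:
  assumes "K \<ge> 1" "0 \<le> s1" "s1 \<le> s2"
  shows "R0 * (s2 - s1) \<le> u K j s2 - u K j s1"
  using increment_ge[OF assms finite.emptyI, of 0 j] by simp

text \<open>A neighbour that lies higher by at least the distance to it contributes a jump rate of at
  least the order of ln K: the factor K^(u_{l+i} - u_i) outweighs the exponential decay of the
  kernel G at l h_K.\<close>

lemma jump_rate_ge:
  assumes "K \<ge> 1" and jump: "\<bar>of_int l * \<delta> K\<bar> \<le> u K (l + i) t - u K i t"
  shows "p0 * c * (\<delta> K * ln (real K)) \<le> jump_rate K i t l"
proof -
  define h where "h = \<delta> K * ln (real K)"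
  define \<Delta> where "\<Delta> = u K (l + i) t - u K i t"
  have h: "0 \<le> h" unfolding h_def using delta_pos[OF assms(1)] assms(1) by simp
  have "\<bar>of_int l * h\<bar> = ln (real K) * \<bar>of_int l * \<delta> K\<bar>"
    unfolding h_def using assms(1) by (simp add: abs_mult)
  also have "\<dots> \<le> ln (real K) * \<Delta>"
    using jump assms(1) unfolding \<Delta>_def by (intro mult_left_mono) auto
  finally have "c \<le> c * exp (ln (real K) * \<Delta> - \<bar>of_int l * h\<bar>)"
    using c_pos by simp
  also have "\<dots> = c * exp (- \<bar>of_int l * h\<bar>) * exp (ln (real K) * \<Delta>)"
    by (simp add: exp_diff exp_minus field_simps)
  also have "\<dots> \<le> G (of_int l * h) * exp (ln (real K) * \<Delta>)"
    using G_exp_ge[of "of_int l * h"] by (simp add: exp_minus field_simps)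
  finally have "p0 * h * c
      \<le> p ((of_int l + of_int i) * \<delta> K) * h * (G (of_int l * h) * exp (ln (real K) * \<Delta>))"
    using p_ge p_nonneg p0_pos h c_pos by (intro mult_mono) auto
  then show ?thesis
    unfolding jump_rate_def h_def \<Delta>_def by (simp add: ac_simps)
qed

lemma growth_under_jumps:
  assumes "K \<ge> 1" "0 \<le> s0" "s0 \<le> s" "finite \<Lambda>"
    and jumps: "\<And>t l. s0 \<le> t \<Longrightarrow> t \<le> s \<Longrightarrow> l \<in> \<Lambda> \<Longrightarrow>
       \<bar>of_int l * \<delta> K\<bar> \<le> u K (l + j) t - u K j t"
  shows "u K j 0 + R0 * s + real (card \<Lambda>) * (p0 * c * (\<delta> K * ln (real K))) * (s - s0) \<le> u K j s"
proof -
  have "real (card \<Lambda>) * (p0 * c * (\<delta> K * ln (real K))) \<le> sum (jump_rate K j t) \<Lambda>"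
    if "s0 \<le> t" "t \<le> s" for t
    using jump_rate_ge[OF \<open>K \<ge> 1\<close> jumps[OF that]] by (intro sum_bounded_below) auto
  then have "(R0 + real (card \<Lambda>) * (p0 * c * (\<delta> K * ln (real K)))) * (s - s0)
      \<le> u K j s - u K j s0"
    using assms(1-4) by (intro increment_ge) auto
  moreover have "R0 * (s0 - 0) \<le> u K j s0 - u K j 0"
    using increment_ge_R0 assms(1,2) by blast
  ultimately show ?thesis by (simp add: algebra_simps)
qed

lemma grid_value_ge:
  assumes "K \<ge> 1" "0 < \<sigma>" "\<sigma> \<le> s" "2 * \<delta> K \<le> \<sigma>"
    and init: "- B \<le> u K j 0"
    and high: "\<And>t l. s - \<sigma> \<le> t \<Longrightarrow> t \<le> s \<Longrightarrow> \<bar>of_int l * \<delta> K - y\<bar> \<le> \<sigma> \<Longrightarrow>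
       b + \<bar>y\<bar> + (\<bar>R0\<bar> + 1) * \<sigma> \<le> u K (l + j) t"
    and large: "b + B + \<bar>R0\<bar> * s < p0 * c * ln (real K) * \<sigma>\<^sup>2 / 2"
  shows "b \<le> u K j s"
proof (rule ccontr)
  assume "\<not> b \<le> u K j s"
  then have dip: "u K j s < b" by simp
  obtain \<Lambda> where \<Lambda>: "finite \<Lambda>"
      "\<And>l. l \<in> \<Lambda> \<Longrightarrow> y - \<sigma> \<le> of_int l * \<delta> K \<and> of_int l * \<delta> K \<le> y"
    and card: "\<sigma> \<le> 2 * \<delta> K * real (card \<Lambda>)"
    using grid_points_in_interval[OF delta_pos[OF \<open>K \<ge> 1\<close>] \<open>2 * \<delta> K \<le> \<sigma>\<close>] by blast
  have low: "u K j t \<le> b + \<bar>R0\<bar> * \<sigma>" if "s - \<sigma> \<le> t" "t \<le> s" for t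
  proof -
    have "R0 * (s - t) \<le> u K j s - u K j t"
      using increment_ge_R0[OF \<open>K \<ge> 1\<close>] that assms(3) by simp
    moreover have "- R0 * (s - t) \<le> \<bar>R0\<bar> * \<sigma>"
      using that by (intro order.trans[OF _ mult_mono[of "- R0" "\<bar>R0\<bar>" "s - t" \<sigma>]]) auto
    ultimately show ?thesis using dip by linarith
  qed
  have "\<bar>of_int l * \<delta> K\<bar> \<le> u K (l + j) t - u K j t"
    if "s - \<sigma> \<le> t" "t \<le> s" "l \<in> \<Lambda>" for t l
  proof -
    have "\<bar>of_int l * \<delta> K\<bar> \<le> \<bar>y\<bar> + \<sigma>"
      using \<Lambda>(2)[OF \<open>l \<in> \<Lambda>\<close>] by (simp add: abs_le_iff) linarith
    moreover have "\<bar>of_int l * \<delta> K - y\<bar> \<le> \<sigma>"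
      using \<Lambda>(2)[OF \<open>l \<in> \<Lambda>\<close>] by (simp add: abs_le_iff)
    then have "b + \<bar>y\<bar> + (\<bar>R0\<bar> * \<sigma> + \<sigma>) \<le> u K (l + j) t"
      using high[OF that(1,2)] by (simp add: distrib_right)
    ultimately show ?thesis
      using low[OF that(1,2)] by linarith
  qed
  then have growth:
      "u K j 0 + R0 * s + real (card \<Lambda>) * (p0 * c * (\<delta> K * ln (real K))) * \<sigma> \<le> u K j s"
    using growth_under_jumps[OF \<open>K \<ge> 1\<close> _ _ \<open>finite \<Lambda>\<close>, of "s - \<sigma>" s j] assms(2,3) by simp
  have "\<sigma>\<^sup>2 / 2 \<le> \<delta> K * real (card \<Lambda>) * \<sigma>"
    using mult_right_mono[OF card, of \<sigma>] \<open>0 < \<sigma>\<close> by (simp add: power2_eq_square)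
  then have "p0 * c * ln (real K) * (\<sigma>\<^sup>2 / 2)
      \<le> p0 * c * ln (real K) * (\<delta> K * real (card \<Lambda>) * \<sigma>)"
    using p0_pos c_pos \<open>K \<ge> 1\<close> by (intro mult_left_mono) auto
  moreover have "- \<bar>R0\<bar> * s \<le> R0 * s"
    using assms(2,3) by (intro mult_right_mono) auto
  moreover have "real (card \<Lambda>) * (p0 * c * (\<delta> K * ln (real K))) * \<sigma>
      = p0 * c * ln (real K) * (\<delta> K * real (card \<Lambda>) * \<sigma>)"
    by (simp add: ac_simps)
  ultimately show False
    using growth init large dip by linarith
qed

lemma interp_ge_near:
  assumes K: "K \<ge> 1" "2 * \<delta> K \<le> \<sigma>" and \<sigma>: "0 < \<sigma>" "2 * \<sigma> \<le> t" "\<sigma> \<le> 1 / 2"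
    and init: "\<And>j. \<bar>of_int j * \<delta> K - x\<bar> \<le> 1 \<Longrightarrow> - B \<le> u K j 0"
    and high: "\<And>s' z'. \<bar>s' - t\<bar> + \<bar>z' - (x + y)\<bar> < 5 * \<sigma> \<Longrightarrow>
       b + \<bar>y\<bar> + (\<bar>R0\<bar> + 1) * \<sigma> \<le> interp (\<delta> K) (\<lambda>i. u K i s') z'"
    and large: "b + B + 2 * t * \<bar>R0\<bar> < p0 * c * ln (real K) * \<sigma>\<^sup>2 / 2"
    and st: "\<bar>s - t\<bar> < \<sigma>" and zx: "\<bar>z - x\<bar> < \<sigma>"
  shows "b \<le> interp (\<delta> K) (\<lambda>i. u K i s) z"
proof (rule interp_ge_if_nodes_ge[OF delta_pos[OF K(1)]])
  fix j assume jz: "\<bar>of_int j * \<delta> K - z\<bar> \<le> \<delta> K"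
  show "b \<le> u K j s"
  proof (rule grid_value_ge[OF K(1) \<sigma>(1) _ K(2)])
    show "\<sigma> \<le> s" using st \<sigma>(2) by linarith
    have "\<bar>of_int j * \<delta> K - x\<bar> \<le> 1"
      using jz zx K(2) \<sigma>(3) unfolding abs_le_iff abs_less_iff by linarith
    then show "- B \<le> u K j 0" by (rule init)
  next
    fix t' l assume t': "s - \<sigma> \<le> t'" "t' \<le> s" and l: "\<bar>of_int l * \<delta> K - y\<bar> \<le> \<sigma>"
    have "\<bar>of_int (l + j) * \<delta> K - (x + y)\<bar>
        \<le> \<bar>of_int l * \<delta> K - y\<bar> + \<bar>of_int j * \<delta> K - z\<bar> + \<bar>z - x\<bar>"
      by (simp add: distrib_right)
    moreover have "\<bar>t' - t\<bar> < 2 * \<sigma>"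
      using t' st by (simp add: abs_less_iff)
    ultimately have "\<bar>t' - t\<bar> + \<bar>of_int (l + j) * \<delta> K - (x + y)\<bar> < 5 * \<sigma>"
      using l jz zx K(2) by linarith
    then have "b + \<bar>y\<bar> + (\<bar>R0\<bar> + 1) * \<sigma> \<le> interp (\<delta> K) (\<lambda>i. u K i t') (of_int (l + j) * \<delta> K)"
      by (rule high)
    also have "\<dots> = u K (l + j) t'"
      using delta_pos[OF K(1)] by (intro interp_grid_point) simp
    finally show "b + \<bar>y\<bar> + (\<bar>R0\<bar> + 1) * \<sigma> \<le> u K (l + j) t'" .
  next
    have "\<bar>R0\<bar> * s \<le> \<bar>R0\<bar> * (2 * t)"
      using st \<sigma>(2) by (intro mult_left_mono) auto
    with large show "b + B + \<bar>R0\<bar> * s < p0 * c * ln (real K) * \<sigma>\<^sup>2 / 2"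
      by (simp add: algebra_simps)
  qed
qed

lemma eventually_ge_near_if_eventually_gt_near_shifted:
  assumes "\<delta> \<longlonglongrightarrow> 0" "0 < t" "b + \<bar>y\<bar> < a"
    and init: "\<forall>\<^sub>F K in sequentially. \<forall>j. \<bar>of_int j * \<delta> K - x\<bar> \<le> 1 \<longrightarrow> - B \<le> u K j 0"
    and high: "eventually (\<lambda>(K, s, z). a < interp (\<delta> K) (\<lambda>i. u K i s) z)
      (sequentially \<times>\<^sub>F nhds (t, x + y))"
  shows "eventually (\<lambda>(K, s, z). b \<le> interp (\<delta> K) (\<lambda>i. u K i s) z)
      (sequentially \<times>\<^sub>F nhds (t, x))"
proof -
  obtain P Q where P: "eventually P sequentially" and Q: "eventually Q (nhds (t, x + y))"
    and PQ: "\<And>K s z. P K \<Longrightarrow> Q (s, z) \<Longrightarrow> a < interp (\<delta> K) (\<lambda>i. u K i s) z"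
    using high unfolding eventually_prod_filter by fastforce
  obtain r where "r > 0" and r: "\<And>q. dist q (t, x + y) < r \<Longrightarrow> Q q"
    using Q unfolding eventually_nhds_metric by blast
  define \<sigma> where "\<sigma> = min (min (r / 5) (t / 2)) (min (1 / 2) ((a - b - \<bar>y\<bar>) / (\<bar>R0\<bar> + 1)))"
  have \<sigma>: "\<sigma> \<le> r / 5" "\<sigma> \<le> t / 2" "\<sigma> \<le> 1 / 2" "\<sigma> \<le> (a - b - \<bar>y\<bar>) / (\<bar>R0\<bar> + 1)"
    unfolding \<sigma>_def
    by (rule min.coboundedI1[OF min.cobounded1] min.coboundedI1[OF min.cobounded2]
        min.coboundedI2[OF min.cobounded1] min.coboundedI2[OF min.cobounded2])+
  have "0 < \<sigma>"
    using \<open>r > 0\<close> \<open>0 < t\<close> assms(3) unfolding \<sigma>_def by (simp add: add_pos_nonneg)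
  have gap: "b + \<bar>y\<bar> + (\<bar>R0\<bar> + 1) * \<sigma> \<le> a"
    using \<sigma>(4) by (simp add: pos_le_divide_eq add_pos_nonneg mult.commute)
  define \<Lambda> where "\<Lambda> = 2 * (b + B + 2 * t * \<bar>R0\<bar>) / (p0 * c * \<sigma>\<^sup>2)"
  define good where "good K \<longleftrightarrow> K \<ge> 1 \<and> 2 * \<delta> K \<le> \<sigma> \<and> \<Lambda> < ln (real K) \<and> P K
      \<and> (\<forall>j. \<bar>of_int j * \<delta> K - x\<bar> \<le> 1 \<longrightarrow> - B \<le> u K j 0)" for K
  have "\<forall>\<^sub>F K in sequentially. \<Lambda> < ln (real K)"
    using filterlim_compose[OF ln_at_top filterlim_real_sequentially]
    unfolding filterlim_at_top_dense by blast
  moreover have "\<forall>\<^sub>F K in sequentially. \<delta> K < \<sigma> / 2"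
    using \<open>0 < \<sigma>\<close> by (intro order_tendstoD(2)[OF assms(1)]) simp
  ultimately have "eventually good sequentially"
    using init P eventually_ge_at_top[of 1] by eventually_elim (auto simp: good_def)
  moreover have "b \<le> interp (\<delta> K) (\<lambda>i. u K i s) z"
    if "good K" and "dist (s, z) (t, x) < \<sigma>" for K s z
  proof (rule interp_ge_near)
    show "\<bar>s - t\<bar> < \<sigma>" "\<bar>z - x\<bar> < \<sigma>"
      using that(2) unfolding dist_Pair_Pair dist_real_def
      by (auto intro: le_less_trans[OF real_sqrt_sum_squares_ge1] le_less_trans[OF real_sqrt_sum_squares_ge2])
  next
    fix s' z' assume "\<bar>s' - t\<bar> + \<bar>z' - (x + y)\<bar> < 5 * \<sigma>"
    moreover have "dist (s', z') (t, x + y) \<le> \<bar>s' - t\<bar> + \<bar>z' - (x + y)\<bar>"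
      unfolding dist_Pair_Pair dist_real_def power2_abs by (rule sqrt_sum_squares_le_sum_abs)
    ultimately have "Q (s', z')"
      using r \<sigma>(1) by simp
    with PQ that(1) have "a < interp (\<delta> K) (\<lambda>i. u K i s') z'"
      unfolding good_def by blast
    with gap show "b + \<bar>y\<bar> + (\<bar>R0\<bar> + 1) * \<sigma> \<le> interp (\<delta> K) (\<lambda>i. u K i s') z'"
      by linarith
  next
    have "2 * (b + B + 2 * t * \<bar>R0\<bar>) < ln (real K) * (p0 * c * \<sigma>\<^sup>2)"
      using that(1) \<open>0 < \<sigma>\<close> p0_pos c_pos unfolding good_def \<Lambda>_def by (simp add: pos_divide_less_eq)
    then show "b + B + 2 * t * \<bar>R0\<bar> < p0 * c * ln (real K) * \<sigma>\<^sup>2 / 2"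
      by (simp add: algebra_simps)
  qed (use that(1) \<open>0 < \<sigma>\<close> \<sigma>(2,3) in \<open>auto simp: good_def\<close>)
  moreover have "eventually (\<lambda>q. dist q (t, x) < \<sigma>) (nhds (t, x))"
    using \<open>0 < \<sigma>\<close> eventually_nhds_metric by blast
  ultimately show ?thesis
    unfolding eventually_prod_filter
    by (intro exI[of _ good] exI[of _ "\<lambda>q. dist q (t, x) < \<sigma>"]) (auto simp: split_paired_all)
qed

end

theorem lemma5p2:
  fixes R p G :: "real \<Rightarrow> real"
    and \<delta> :: "nat \<Rightarrow> real"
    and u0 :: "nat \<Rightarrow> int \<Rightarrow> real"
    and u0lim :: "real \<Rightarrow> real"
    and u :: "nat \<Rightarrow> int \<Rightarrow> real \<Rightarrow> real"
    and A B1 L :: real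
  assumes delta_pos: "\<And>K. K \<ge> 1 \<Longrightarrow> \<delta> K > 0"
    and delta_lim: "\<delta> \<longlonglongrightarrow> 0"
    and h_lim: "(\<lambda>K. \<delta> K * ln (real K)) \<longlonglongrightarrow> 0"
    \<comment> \<open>(A1)\<close>
    and R_lip: "\<exists>C. C-lipschitz_on UNIV R"
    and p_lip: "\<exists>C. C-lipschitz_on UNIV p"
    and R_bdd: "\<exists>Rlo Rhi. \<forall>x. Rlo \<le> R x \<and> R x \<le> Rhi"
    and p_bdd: "\<exists>plo phi. 0 < plo \<and> (\<forall>x. plo \<le> p x \<and> p x \<le> phi)"
    \<comment> \<open>(A2)\<close>
    and G_pos: "\<And>x. G x > 0"
    and G_cont: "continuous_on UNIV G"
    and G_int: "(G has_integral 1) UNIV"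
    and G_f: "\<exists>c C. 0 < c \<and> (\<forall>x. c \<le> G x * exp \<bar>x\<bar> \<and> G x * exp \<bar>x\<bar> \<le> C)"
    \<comment> \<open>(A3)\<close>
    and A_pos: "A > 0" and B1_pos: "B1 > 0"
    and A3: "\<And>K i. K \<ge> 1 \<Longrightarrow> u0 K i \<le> - A * \<bar>of_int i * \<delta> K\<bar> + B1"
    \<comment> \<open>(A4)\<close>
    and L_pos: "0 < L" and L_lt1: "L < 1"
    and A4: "\<And>K i. K \<ge> 1 \<Longrightarrow> \<bar>u0 K (i + 1) - u0 K i\<bar> \<le> L * \<delta> K"
    \<comment> \<open>(A5)\<close>
    and u0lim_cont: "continuous_on UNIV u0lim"
    and A5: "\<And>a b. uniform_limit {a..b} (\<lambda>K. interp (\<delta> K) (u0 K)) u0lim sequentially"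
    \<comment> \<open>u^K solves the lattice system with initial data u^{K,0}\<close>
    and u_init: "\<And>K i. K \<ge> 1 \<Longrightarrow> u K i 0 = u0 K i"
    and u_ode: "\<And>K i t. K \<ge> 1 \<Longrightarrow> t \<ge> 0 \<Longrightarrow>
       \<exists>S. ((\<lambda>l::int. p ((of_int l + of_int i) * \<delta> K) * (\<delta> K * ln (real K))
                 * G (of_int l * (\<delta> K * ln (real K)))
                 * exp (ln (real K) * (u K (l + i) t - u K i t))) has_sum S) UNIV
           \<and> ((\<lambda>s. u K i s) has_real_derivative (R (of_int i * \<delta> K) + S)) (at t within {0..})"
  shows "\<And>t x y. t > 0 \<Longrightarrow>
     lower_relaxed (\<lambda>K s z. interp (\<delta> K) (\<lambda>i. u K i s) z) t (x + y)
       \<le> lower_relaxed (\<lambda>K s z. interp (\<delta> K) (\<lambda>i. u K i s) z) t x + ereal \<bar>y\<bar>"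
proof -
  obtain R0 where "\<And>x. R0 \<le> R x" using R_bdd by blast
  moreover obtain p0 where "0 < p0" "\<And>x. p0 \<le> p x" using p_bdd by blast
  moreover obtain c where "0 < c" "\<And>x. c \<le> G x * exp \<bar>x\<bar>" using G_f by blast
  ultimately interpret lattice_system R p G \<delta> u R0 p0 c
    by unfold_locales (use delta_pos G_pos u_ode in auto)
  fix t x y :: real
  assume "t > 0"
  obtain B where "\<forall>\<^sub>F K in sequentially. \<forall>j. \<bar>of_int j * \<delta> K - x\<bar> \<le> 1 \<longrightarrow> - B \<le> u0 K j"
    using eventually_grid_values_ge[OF delta_pos A5 continuous_on_subset[OF u0lim_cont]] by blast
  then have init: "\<forall>\<^sub>F K in sequentially. \<forall>j. \<bar>of_int j * \<delta> K - x\<bar> \<le> 1 \<longrightarrow> - B \<le> u K j 0"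
    using eventually_ge_at_top[of 1] by eventually_elim (simp add: u_init)
  define f where "f = (\<lambda>(K, s, z). interp (\<delta> K) (\<lambda>i. u K i s) z)"
  have "Liminf (sequentially \<times>\<^sub>F nhds (t, x + y)) (\<lambda>q. ereal (f q))
      \<le> Liminf (sequentially \<times>\<^sub>F nhds (t, x)) (\<lambda>q. ereal (f q)) + ereal \<bar>y\<bar>"
    using eventually_ge_near_if_eventually_gt_near_shifted[OF delta_lim \<open>t > 0\<close> _ init]
    unfolding f_def case_prod_unfold by (intro Liminf_le_Liminf_add) blast
  then show "lower_relaxed (\<lambda>K s z. interp (\<delta> K) (\<lambda>i. u K i s) z) t (x + y)
      \<le> lower_relaxed (\<lambda>K s z. interp (\<delta> K) (\<lambda>i. u K i s) z) t x + ereal \<bar>y\<bar>"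
    unfolding lower_relaxed_def f_def case_prod_unfold .
qed

end
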